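(* Let $(X,\{R_i\}_{i=0}^d)$ be a symmetric association scheme with adjacency matrices $A_0=I,\dots,A_d$ and intersection numbers $p_{ij}^k$, and let $W=\sum_{i=0}^dw_iA_i$ with $w_0=1$ be a complex Hadamard matrix. Suppose there exists $i\in\{1,\dots,d-1\}$ such that $p_{i_1,j_1}^i>0$ for all $i_1,j_1\in\{1,\dots,d-1\}$, and moreover $p_{i,j}^d>0$ for all $j\in\{1,\dots,d-1\}$. Then \[ H_4(W)\setminus\{1\}=\left\{\frac{w_{i_1}w_{i_2}}{w_{j_1}w_{j_2}}\;\middle|\;i_1,i_2,j_1,j_2\in\{1,\dots,d\}\right\}\setminus\{1\}. \]
   Context: An association scheme $(X,\{R_i\}_{i=0}^d)$ is a partition of $X\times X$ into relations $R_0=\{(x,x)\}$, $R_1,\dots,R_d$ such that for $(x,y)\in R_k$ the number $p_{ij}^k=|\{z\in X:(x,z)\in R_i,(z,y)\in R_j\}|$ depends only on $i,j,k$; symmetric means each $R_i$ is symmetric. $A_i$ is the $(0,1)$-matrix of $R_i$. A complex Hadamard matrix is a square complex matrix $H$ of order $n=|X|$ with entries of absolute value $1$ and $HH^*=nI$. For $W$ indexed by $X$, \[ H_4(W)=\left\{\frac{W_{x_1,y_1}W_{x_2,y_2}}{W_{x_2,y_1}W_{x_1,y_2}}\;\middle|\;x_1,x_2,y_1,y_2\in X,\ |\{x_1,x_2,y_1,y_2\}|=4\right\}. \] *)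

theory Defs
  imports Complex_Main
begin

text \<open>An association scheme on the finite set X with classes R_0,...,R_d is encoded by
  the class function R: (x,y) belongs to relation R_i iff R x y = i.
  A_i is the 0/1 matrix of R_i, so a matrix sum_i w_i A_i has (x,y) entry w (R x y).\<close>

definition pcount :: "'a set \<Rightarrow> ('a \<Rightarrow> 'a \<Rightarrow> nat) \<Rightarrow> nat \<Rightarrow> nat \<Rightarrow> 'a \<Rightarrow> 'a \<Rightarrow> nat" where
  "pcount X R i j x y = card {z \<in> X. R x z = i \<and> R z y = j}"

definition assoc_scheme :: "'a set \<Rightarrow> nat \<Rightarrow> ('a \<Rightarrow> 'a \<Rightarrow> nat) \<Rightarrow> bool" where
  "assoc_scheme X d R \<longleftrightarrow>
     finite X \<and>
     (\<forall>x\<in>X. \<forall>y\<in>X. R x y \<le> d) \<and>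
     (\<forall>i\<le>d. \<exists>x\<in>X. \<exists>y\<in>X. R x y = i) \<and>
     (\<forall>x\<in>X. \<forall>y\<in>X. R x y = 0 \<longleftrightarrow> x = y) \<and>
     (\<forall>i\<le>d. \<forall>j\<le>d. \<forall>k\<le>d. \<forall>x\<in>X. \<forall>y\<in>X. \<forall>x'\<in>X. \<forall>y'\<in>X.
        R x y = k \<longrightarrow> R x' y' = k \<longrightarrow> pcount X R i j x y = pcount X R i j x' y')"

definition symmetric_scheme :: "'a set \<Rightarrow> nat \<Rightarrow> ('a \<Rightarrow> 'a \<Rightarrow> nat) \<Rightarrow> bool" where
  "symmetric_scheme X d R \<longleftrightarrow> assoc_scheme X d R \<and> (\<forall>x\<in>X. \<forall>y\<in>X. R x y = R y x)"

definition pnum :: "'a set \<Rightarrow> ('a \<Rightarrow> 'a \<Rightarrow> nat) \<Rightarrow> nat \<Rightarrow> nat \<Rightarrow> nat \<Rightarrow> nat" where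
  "pnum X R i j k = (THE n. \<forall>x\<in>X. \<forall>y\<in>X. R x y = k \<longrightarrow> pcount X R i j x y = n)"

definition complex_hadamard :: "'a set \<Rightarrow> ('a \<Rightarrow> 'a \<Rightarrow> complex) \<Rightarrow> bool" where
  "complex_hadamard X H \<longleftrightarrow>
     (\<forall>x\<in>X. \<forall>y\<in>X. cmod (H x y) = 1) \<and>
     (\<forall>x\<in>X. \<forall>y\<in>X. (\<Sum>z\<in>X. H x z * cnj (H y z)) = (if x = y then of_nat (card X) else 0))"

definition H4 :: "'a set \<Rightarrow> ('a \<Rightarrow> 'a \<Rightarrow> complex) \<Rightarrow> complex set" where
  "H4 X W = {W x1 y1 * W x2 y2 / (W x2 y1 * W x1 y2) | x1 x2 y1 y2.
              x1 \<in> X \<and> x2 \<in> X \<and> y1 \<in> X \<and> y2 \<in> X \<and> card {x1, x2, y1, y2} = 4}"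

end

theory Submission
  imports Defs
begin

text \<open>Every quadruple of classes occurs in a configuration of four distinct points: choose
  x1, x2 in the class i of the hypothesis and complete the two triangles x1-y1-x2 and
  x2-y2-x1 with the required classes. The positivity hypotheses make every triangle over class i
  available except the one with two sides of class d; ratios whose only pairings need that
  triangle reduce to w a / w d or its inverse, which is rewritten as (w a * w 1) / (w d * w 1).\<close>

definition triangle :: "'a set \<Rightarrow> ('a \<Rightarrow> 'a \<Rightarrow> nat) \<Rightarrow> nat \<Rightarrow> nat \<Rightarrow> nat \<Rightarrow> bool" where
  "triangle X R a b k \<longleftrightarrow> (\<forall>x\<in>X. \<forall>y\<in>X. R x y = k \<longrightarrow> (\<exists>z\<in>X. R x z = a \<and> R z y = b))"

definition class_ratios :: "nat \<Rightarrow> (nat \<Rightarrow> complex) \<Rightarrow> complex set" where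
  "class_ratios d w = {w i1 * w i2 / (w j1 * w j2) | i1 i2 j1 j2.
     i1 \<in> {1..d} \<and> i2 \<in> {1..d} \<and> j1 \<in> {1..d} \<and> j2 \<in> {1..d}}"

lemma pnum_eq_pcount:
  assumes "assoc_scheme X d R" "i \<le> d" "j \<le> d" "x \<in> X" "y \<in> X" "R x y \<le> d"
  shows "pnum X R i j (R x y) = pcount X R i j x y"
  unfolding pnum_def
proof (rule the_equality)
  show "\<forall>x'\<in>X. \<forall>y'\<in>X. R x' y' = R x y \<longrightarrow> pcount X R i j x' y' = pcount X R i j x y"
    using assms unfolding assoc_scheme_def by metis
qed (use assms in auto)

lemma triangle_if_pnum_pos:
  assumes "assoc_scheme X d R" "a \<le> d" "b \<le> d" "k \<le> d" "pnum X R a b k > 0"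
  shows "triangle X R a b k"
  unfolding triangle_def
proof (intro ballI impI)
  fix x y assume xy: "x \<in> X" "y \<in> X" "R x y = k"
  then have "card {z \<in> X. R x z = a \<and> R z y = b} > 0"
    using pnum_eq_pcount[OF assms(1-3), of x y] assms(4,5) by (simp add: pcount_def)
  then show "\<exists>z\<in>X. R x z = a \<and> R z y = b"
    by (auto simp: card_gt_0_iff)
qed

lemma triangle_swap:
  assumes "symmetric_scheme X d R" "triangle X R a b k"
  shows "triangle X R b a k"
  using assms unfolding triangle_def symmetric_scheme_def by metis

lemma triangle_rotate:
  assumes S: "symmetric_scheme X d R" and le: "a \<le> d" "b \<le> d" "k \<le> d"
    and T: "triangle X R a b k"
  shows "triangle X R k b a"
proof -
  have A: "assoc_scheme X d R" and sym: "\<forall>x\<in>X. \<forall>y\<in>X. R x y = R y x"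
    using S unfolding symmetric_scheme_def by auto
  obtain x y where xy: "x \<in> X" "y \<in> X" "R x y = k"
    using A le unfolding assoc_scheme_def by metis
  obtain z where z: "z \<in> X" "R x z = a" "R z y = b"
    using T xy unfolding triangle_def by metis
  have "y \<in> {t \<in> X. R x t = k \<and> R t z = b}"
    using xy z sym by auto
  moreover have "finite X"
    using A unfolding assoc_scheme_def by auto
  ultimately have "pcount X R k b x z > 0"
    unfolding pcount_def by (auto simp: card_gt_0_iff)
  then have "pnum X R k b a > 0"
    using pnum_eq_pcount[OF A le(3,2) xy(1) z(1)] z(2) le(1) by simp
  then show ?thesis
    using triangle_if_pnum_pos[OF A le(3,2,1)] by blast
qed

lemma ratio_in_H4_if_triangles:
  assumes S: "symmetric_scheme X d R" and k: "0 < k" "k \<le> d"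
    and pos: "0 < i1" "0 < j1" "0 < i2" "0 < j2"
    and T1: "triangle X R i1 j1 k" and T2: "triangle X R i2 j2 k"
    and nondeg: "\<not> (i1 = j2 \<and> j1 = i2)"
  shows "w i1 * w i2 / (w j1 * w j2) \<in> H4 X (\<lambda>x y. w (R x y))"
proof -
  have A: "assoc_scheme X d R" and sym: "\<forall>x\<in>X. \<forall>y\<in>X. R x y = R y x"
    using S unfolding symmetric_scheme_def by auto
  have diag: "\<forall>x\<in>X. \<forall>y\<in>X. R x y = 0 \<longleftrightarrow> x = y"
    using A unfolding assoc_scheme_def by auto
  obtain x1 x2 where x: "x1 \<in> X" "x2 \<in> X" "R x1 x2 = k"
    using A k unfolding assoc_scheme_def by metis
  obtain y1 where y1: "y1 \<in> X" "R x1 y1 = i1" "R y1 x2 = j1"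
    using T1 x unfolding triangle_def by metis
  have "R x2 x1 = k"
    using x sym by metis
  then obtain y2 where y2: "y2 \<in> X" "R x2 y2 = i2" "R y2 x1 = j2"
    using T2 x unfolding triangle_def by metis
  have "y1 \<noteq> y2"
    using y1 y2 x sym nondeg by metis
  moreover have "x1 \<noteq> x2" "y1 \<noteq> x1" "y1 \<noteq> x2" "y2 \<noteq> x1" "y2 \<noteq> x2"
    using x y1 y2 diag k pos by (metis less_not_refl)+
  ultimately have "card {x1, x2, y1, y2} = 4"
    by auto
  moreover have "R x2 y1 = j1" "R x1 y2 = j2"
    using y1 y2 x sym by metis+
  ultimately show ?thesis
    unfolding H4_def using x y1 y2 by force
qed

lemma H4_subset_class_ratios:
  assumes "assoc_scheme X d R"
  shows "H4 X (\<lambda>x y. w (R x y)) \<subseteq> class_ratios d w"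
proof
  fix v assume "v \<in> H4 X (\<lambda>x y. w (R x y))"
  then obtain x1 x2 y1 y2 where v: "v = w (R x1 y1) * w (R x2 y2) / (w (R x2 y1) * w (R x1 y2))"
    and mem: "x1 \<in> X" "x2 \<in> X" "y1 \<in> X" "y2 \<in> X" and card: "card {x1, x2, y1, y2} = 4"
    unfolding H4_def by blast
  have "x1 \<noteq> y1 \<and> x2 \<noteq> y2 \<and> x2 \<noteq> y1 \<and> x1 \<noteq> y2"
  proof (rule ccontr)
    assume "\<not> ?thesis"
    then have "card {x1, x2, y1, y2} \<le> 3"
      by (auto simp: card_insert_if insert_commute)
    then show False
      using card by simp
  qed
  then have "R x1 y1 \<in> {1..d}" "R x2 y2 \<in> {1..d}" "R x2 y1 \<in> {1..d}" "R x1 y2 \<in> {1..d}"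
    using mem assms unfolding assoc_scheme_def by (auto simp: Suc_le_eq)
  then show "v \<in> class_ratios d w"
    unfolding class_ratios_def v by blast
qed

lemma hadamard_class_nonzero:
  assumes "assoc_scheme X d R" "complex_hadamard X (\<lambda>x y. w (R x y))" "a \<le> d"
  shows "w a \<noteq> 0"
proof -
  obtain x y where "x \<in> X" "y \<in> X" "R x y = a"
    using assms(1,3) unfolding assoc_scheme_def by metis
  then have "cmod (w a) = 1"
    using assms(2) unfolding complex_hadamard_def by blast
  then show ?thesis
    by auto
qed

lemma triangle_if_pnum_hypothesis:
  assumes S: "symmetric_scheme X d R" and i: "i \<in> {1..d-1}"
    and inner: "\<forall>i1\<in>{1..d-1}. \<forall>j1\<in>{1..d-1}. pnum X R i1 j1 i > 0"
    and outer: "\<forall>j\<in>{1..d-1}. pnum X R i j d > 0"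
    and ab: "a \<in> {1..d}" "b \<in> {1..d}" "\<not> (a = d \<and> b = d)"
  shows "triangle X R a b i"
proof -
  have A: "assoc_scheme X d R"
    using S unfolding symmetric_scheme_def by auto
  have last: "triangle X R d c i" if "c \<in> {1..d-1}" for c
    using triangle_rotate[OF S _ _ _ triangle_if_pnum_pos[OF A _ _ _ outer[rule_format, OF that]]]
      i that by auto
  consider "a < d" "b < d" | "a = d" "b < d" | "a < d" "b = d"
    using ab by fastforce
  then show ?thesis
  proof cases
    case 1
    then show ?thesis
      using triangle_if_pnum_pos[OF A] inner i ab by auto
  next
    case 2
    then show ?thesis
      using last ab by auto
  next
    case 3
    then show ?thesis
      using triangle_swap[OF S last] ab by auto
  qed
qed

lemma class_ratios_subset_H4:
  assumes S: "symmetric_scheme X d R" and d: "2 \<le> d" and k: "0 < k" "k \<le> d"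
    and tri: "\<And>a b. a \<in> {1..d} \<Longrightarrow> b \<in> {1..d} \<Longrightarrow> \<not> (a = d \<and> b = d) \<Longrightarrow> triangle X R a b k"
    and nonzero: "\<And>a. a \<in> {1..d} \<Longrightarrow> w a \<noteq> 0"
  shows "class_ratios d w - {1} \<subseteq> H4 X (\<lambda>x y. w (R x y))"
proof
  fix v assume "v \<in> class_ratios d w - {1}"
  then obtain i1 i2 j1 j2 where v: "v = w i1 * w i2 / (w j1 * w j2)" and v1: "v \<noteq> 1"
    and r: "i1 \<in> {1..d}" "i2 \<in> {1..d}" "j1 \<in> {1..d}" "j2 \<in> {1..d}"
    unfolding class_ratios_def by blast
  note ratio_in_H4 = ratio_in_H4_if_triangles[OF S k, where w = w]
  have one: "1 \<in> {1..d}" "1 \<noteq> d"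
    using d by auto
  have reduced: "\<exists>a\<in>{1..d}. v = w a / w d \<or> v = w d / w a"
    if "i1 = d \<and> j1 = d \<or> i2 = d \<and> j2 = d" "i1 = d \<and> j2 = d \<or> i2 = d \<and> j1 = d"
    using that
  proof (elim disjE conjE)
    assume "i1 = d" "j1 = d" "j2 = d"
    then show ?thesis using v r nonzero by (intro bexI[of _ i2]) auto
  next
    assume "i1 = d" "j1 = d" "i2 = d"
    then show ?thesis using v r nonzero by (intro bexI[of _ j2]) auto
  next
    assume "i2 = d" "j2 = d" "i1 = d"
    then show ?thesis using v r nonzero by (intro bexI[of _ j1]) auto
  next
    assume "i2 = d" "j2 = d" "j1 = d"
    then show ?thesis using v r nonzero by (intro bexI[of _ i1]) auto
  qed
  consider "\<not> (i1 = d \<and> j1 = d)" "\<not> (i2 = d \<and> j2 = d)"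
    | "\<not> (i1 = d \<and> j2 = d)" "\<not> (i2 = d \<and> j1 = d)"
    | a where "a \<in> {1..d}" "v = w a / w d \<or> v = w d / w a"
    using reduced by blast
  then show "v \<in> H4 X (\<lambda>x y. w (R x y))"
  proof cases
    case 1
    moreover have "\<not> (i1 = j2 \<and> j1 = i2)"
      using v v1 r nonzero by (auto simp: mult.commute)
    ultimately show ?thesis
      using ratio_in_H4[of i1 j1 i2 j2] tri r v by auto
  next
    case 2
    moreover have "\<not> (i1 = j1 \<and> j2 = i2)"
      using v v1 r nonzero by auto
    moreover have "v = w i1 * w i2 / (w j2 * w j1)"
      using v by (simp add: mult.commute)
    ultimately show ?thesis
      using ratio_in_H4[of i1 j2 i2 j1] tri r by auto
  next
    case (3 a)
    have "a \<noteq> d"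
      using 3 v1 nonzero by auto
    have "w a / w d = w a * w 1 / (w d * w 1)" "w d / w a = w d * w 1 / (w a * w 1)"
      using nonzero one by auto
    then show ?thesis
      using 3 \<open>a \<noteq> d\<close> ratio_in_H4[of a d 1 1] ratio_in_H4[of d a 1 1] tri one by auto
  qed
qed

theorem lemma5p3:
  fixes X :: "'a set" and d :: nat and R :: "'a \<Rightarrow> 'a \<Rightarrow> nat" and w :: "nat \<Rightarrow> complex"
  assumes "symmetric_scheme X d R"
    and "w 0 = 1"
    and "complex_hadamard X (\<lambda>x y. w (R x y))"
    and "\<exists>i\<in>{1..d-1}. (\<forall>i1\<in>{1..d-1}. \<forall>j1\<in>{1..d-1}. pnum X R i1 j1 i > 0)
                      \<and> (\<forall>j\<in>{1..d-1}. pnum X R i j d > 0)"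
  shows "H4 X (\<lambda>x y. w (R x y)) - {1} =
         {w i1 * w i2 / (w j1 * w j2) | i1 i2 j1 j2.
            i1 \<in> {1..d} \<and> i2 \<in> {1..d} \<and> j1 \<in> {1..d} \<and> j2 \<in> {1..d}} - {1}"
proof -
  have A: "assoc_scheme X d R"
    using assms(1) unfolding symmetric_scheme_def by blast
  obtain i where i: "i \<in> {1..d-1}"
    and inner: "\<forall>i1\<in>{1..d-1}. \<forall>j1\<in>{1..d-1}. pnum X R i1 j1 i > 0"
    and outer: "\<forall>j\<in>{1..d-1}. pnum X R i j d > 0"
    using assms(4) by blast
  have "class_ratios d w - {1} \<subseteq> H4 X (\<lambda>x y. w (R x y))"
  proof (rule class_ratios_subset_H4[OF assms(1)])
    show "2 \<le> d" "0 < i" "i \<le> d"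
      using i by auto
  qed (use triangle_if_pnum_hypothesis[OF assms(1) i inner outer]
         hadamard_class_nonzero[OF A assms(3)] in auto)
  with H4_subset_class_ratios[OF A] show ?thesis
    unfolding class_ratios_def by blast
qed

end
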